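(* Let $k\ge 2$, let $G$ be a finite simple graph, and let $c:V(G)\to\{1,\dots,k\}$ be a coloring with $|c^{-1}(1)|=|c^{-1}(2)|=\dots=|c^{-1}(k)|$. Then $c$ is a neighborhood-balanced $k$-coloring of $G$ if and only if $c$ is a closed neighborhood balanced $k$-coloring of the complement $\overline{G}$.
   Context: For a vertex $v$, $N(v)=\{u: uv\in E\}$ and $N[v]=N(v)\cup\{v\}$. A neighborhood-balanced $k$-coloring of a graph is a map $c:V\to\{1,\dots,k\}$ such that for every vertex $v$ the numbers $|\{u\in N(v): c(u)=i\}|$, $i=1,\dots,k$, are all equal. A closed neighborhood balanced $k$-coloring is defined in the same way with $N[v]$ in place of $N(v)$. *)

theory Defs
  imports Main
begin

definition simple_graph :: "'a set \<Rightarrow> ('a \<Rightarrow> 'a \<Rightarrow> bool) \<Rightarrow> bool" where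
  "simple_graph V E \<longleftrightarrow> finite V \<and> (\<forall>u v. E u v \<longrightarrow> u \<in> V \<and> v \<in> V)
     \<and> (\<forall>u v. E u v \<longrightarrow> E v u) \<and> (\<forall>v. \<not> E v v)"

definition compl_graph :: "'a set \<Rightarrow> ('a \<Rightarrow> 'a \<Rightarrow> bool) \<Rightarrow> 'a \<Rightarrow> 'a \<Rightarrow> bool" where
  "compl_graph V E u v \<longleftrightarrow> u \<in> V \<and> v \<in> V \<and> u \<noteq> v \<and> \<not> E u v"

definition nbhd :: "'a set \<Rightarrow> ('a \<Rightarrow> 'a \<Rightarrow> bool) \<Rightarrow> 'a \<Rightarrow> 'a set" where
  "nbhd V E v = {u \<in> V. E u v}"

definition closed_nbhd :: "'a set \<Rightarrow> ('a \<Rightarrow> 'a \<Rightarrow> bool) \<Rightarrow> 'a \<Rightarrow> 'a set" where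
  "closed_nbhd V E v = insert v (nbhd V E v)"

definition is_coloring :: "'a set \<Rightarrow> nat \<Rightarrow> ('a \<Rightarrow> nat) \<Rightarrow> bool" where
  "is_coloring V k c \<longleftrightarrow> (\<forall>v\<in>V. c v \<in> {1..k})"

definition nb_coloring :: "'a set \<Rightarrow> ('a \<Rightarrow> 'a \<Rightarrow> bool) \<Rightarrow> nat \<Rightarrow> ('a \<Rightarrow> nat) \<Rightarrow> bool" where
  "nb_coloring V E k c \<longleftrightarrow> is_coloring V k c \<and>
     (\<forall>v\<in>V. \<forall>i\<in>{1..k}. \<forall>j\<in>{1..k}.
        card {u \<in> nbhd V E v. c u = i} = card {u \<in> nbhd V E v. c u = j})"

definition cnb_coloring :: "'a set \<Rightarrow> ('a \<Rightarrow> 'a \<Rightarrow> bool) \<Rightarrow> nat \<Rightarrow> ('a \<Rightarrow> nat) \<Rightarrow> bool" where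
  "cnb_coloring V E k c \<longleftrightarrow> is_coloring V k c \<and>
     (\<forall>v\<in>V. \<forall>i\<in>{1..k}. \<forall>j\<in>{1..k}.
        card {u \<in> closed_nbhd V E v. c u = i} = card {u \<in> closed_nbhd V E v. c u = j})"

end

theory Submission
  imports Defs
begin

text \<open>In the complement, the closed neighbourhood of v is exactly the set of vertices that are
  not neighbours of v in the original graph. Hence for every colour i the i-coloured part of
  the closed complement neighbourhood and the i-coloured part of the open neighbourhood add up
  to the whole colour class of i. When all colour classes have the same size, the counts in one
  neighbourhood are all equal iff the counts in the other are.\<close>

lemma closed_nbhd_compl_graph:
  assumes "v \<in> V" and "\<not> E v v"
  shows "closed_nbhd V (compl_graph V E) v = V - nbhd V E v"
  using assms unfolding closed_nbhd_def nbhd_def compl_graph_def by auto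

lemma card_closed_nbhd_compl_graph_colour_class:
  assumes "finite V" and "v \<in> V" and "\<not> E v v"
  shows "card {u \<in> closed_nbhd V (compl_graph V E) v. c u = i} + card {u \<in> nbhd V E v. c u = i}
       = card {u \<in> V. c u = i}"
proof -
  have split: "{u \<in> closed_nbhd V (compl_graph V E) v. c u = i}
      = {u \<in> V. c u = i} - {u \<in> nbhd V E v. c u = i}"
    using closed_nbhd_compl_graph[of v V E] assms(2,3) by auto
  have sub: "{u \<in> nbhd V E v. c u = i} \<subseteq> {u \<in> V. c u = i}"
    unfolding nbhd_def by auto
  have fin: "finite {u \<in> V. c u = i}"
    using assms(1) by simp
  show ?thesis
    unfolding split card_Diff_subset[OF finite_subset[OF sub fin] sub]
    using card_mono[OF fin sub] by simp
qed

theorem theorem2p16: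
  fixes V :: "'a set" and E :: "'a \<Rightarrow> 'a \<Rightarrow> bool" and k :: nat and c :: "'a \<Rightarrow> nat"
  assumes "k \<ge> 2"
    and "simple_graph V E"
    and "is_coloring V k c"
    and "\<forall>i\<in>{1..k}. \<forall>j\<in>{1..k}. card {v \<in> V. c v = i} = card {v \<in> V. c v = j}"
  shows "nb_coloring V E k c \<longleftrightarrow> cnb_coloring V (compl_graph V E) k c"
proof -
  have "finite V" and irrefl: "\<And>v. \<not> E v v"
    using assms(2) unfolding simple_graph_def by auto
  have "card {u \<in> nbhd V E v. c u = i} = card {u \<in> nbhd V E v. c u = j}
     \<longleftrightarrow> card {u \<in> closed_nbhd V (compl_graph V E) v. c u = i}
       = card {u \<in> closed_nbhd V (compl_graph V E) v. c u = j}"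
    if "v \<in> V" "i \<in> {1..k}" "j \<in> {1..k}" for v i j
  proof -
    have "card {u \<in> V. c u = i} = card {u \<in> V. c u = j}"
      using assms(4) that(2,3) by blast
    then show ?thesis
      using card_closed_nbhd_compl_graph_colour_class[where E = E and c = c and i = i,
          OF \<open>finite V\<close> that(1) irrefl]
        card_closed_nbhd_compl_graph_colour_class[where E = E and c = c and i = j,
          OF \<open>finite V\<close> that(1) irrefl]
      by linarith
  qed
  then show ?thesis
    unfolding nb_coloring_def cnb_coloring_def using assms(3) by blast
qed

end
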